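(* Let $k\ge1$, $\alpha_i\in(1,2)$ and $l_i>0$ for $i=1,\dots,k$. For $\mathbf n=(n_1,\dots,n_k)$ let $$R_{\mathbf n}=\sum_{i=1}^k I_{n_1\cdots n_{i-1}}\otimes l_iR^{(\alpha_i)}_{n_i}\otimes I_{n_{i+1}\cdots n_k},\qquad \tau(R_{\mathbf n})=\sum_{i=1}^k I_{n_1\cdots n_{i-1}}\otimes l_i\,\tau\big(R^{(\alpha_i)}_{n_i}\big)\otimes I_{n_{i+1}\cdots n_k}.$$ Then for every nonzero $\mathbf z\in\mathbb R^{N(\mathbf n)}$, $$\frac12<\frac{\mathbf z^\top R_{\mathbf n}\mathbf z}{\mathbf z^\top\tau(R_{\mathbf n})\mathbf z}<\frac32 .$$
   Context: $N(\mathbf n)=n_1\cdots n_k$. $R^{(\alpha)}_n=T_n(r_\alpha)$ is the $n\times n$ symmetric Toeplitz matrix generated by $r_\alpha(\theta)=(2-2\cos\theta)^{\alpha/2}=|2\sin(\theta/2)|^\alpha$, i.e. $R^{(\alpha)}_n=[\rho^{(\alpha)}_{|i-j|}]_{i,j=1}^n$ with $\rho^{(\alpha)}_j=\frac{(-1)^j\Gamma(\alpha+1)}{\Gamma(\alpha/2-j+1)\Gamma(\alpha/2+j+1)}$. For a real symmetric Toeplitz matrix $T_n=[t_{|i-j|}]$, $\tau(T_n)=T_n-H_n$ with $H_n$ the Hankel matrix whose constant antidiagonals are $t_2,\dots,t_{n-1},0,0,0,t_{n-1},\dots,t_2$. *)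

theory Defs
  imports "HOL-Analysis.Analysis"
begin

text \<open>Matrices are represented as functions nat => nat => real, indexed from 0;
  only the entries with indices below the stated dimension are meaningful.\<close>

type_synonym mat = "nat \<Rightarrow> nat \<Rightarrow> real"

definition idm :: mat where
  "idm i j = (if i = j then 1 else 0)"

text \<open>Kronecker product A (x) B, where q is the dimension of B.\<close>
definition kron :: "mat \<Rightarrow> mat \<Rightarrow> nat \<Rightarrow> mat" where
  "kron A B q r c = A (r div q) (c div q) * B (r mod q) (c mod q)"

definition smat :: "real \<Rightarrow> mat \<Rightarrow> mat" where
  "smat a M i j = a * M i j"

definition madd :: "mat \<Rightarrow> mat \<Rightarrow> mat" where
  "madd A B i j = A i j + B i j"

definition msub :: "mat \<Rightarrow> mat \<Rightarrow> mat" where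
  "msub A B i j = A i j - B i j"

definition toep :: "(nat \<Rightarrow> real) \<Rightarrow> mat" where
  "toep t i j = t (if i \<le> j then j - i else i - j)"

text \<open>Hankel matrix H_n whose constant antidiagonals (0-indexed i+j = 0..2n-2) are
  t_2,...,t_{n-1},0,0,0,t_{n-1},...,t_2. With 1-based s = i+j+2 in 2..2n:
  s <= n-1 gives t_s, s >= n+3 gives t_{2n+2-s}, otherwise 0.\<close>
definition hank :: "(nat \<Rightarrow> real) \<Rightarrow> nat \<Rightarrow> mat" where
  "hank t n i j = (let s = i + j + 2 in
     if s \<le> n - 1 then t s else if n + 3 \<le> s then t (2 * n + 2 - s) else 0)"

definition tau_toep :: "(nat \<Rightarrow> real) \<Rightarrow> nat \<Rightarrow> mat" where
  "tau_toep t n = msub (toep t) (hank t n)"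

text \<open>Fourier coefficients of (2 - 2 cos theta)^(alpha/2).\<close>
definition rho :: "real \<Rightarrow> nat \<Rightarrow> real" where
  "rho \<alpha> j = (-1) ^ j * Gamma (\<alpha> + 1) /
      (Gamma (\<alpha> / 2 - real j + 1) * Gamma (\<alpha> / 2 + real j + 1))"

definition Rfrac :: "real \<Rightarrow> mat" where
  "Rfrac \<alpha> = toep (rho \<alpha>)"

definition tauRfrac :: "real \<Rightarrow> nat \<Rightarrow> mat" where
  "tauRfrac \<alpha> n = tau_toep (rho \<alpha>) n"

text \<open>I_{n_0...n_{i-1}} (x) M (x) I_{n_{i+1}...n_{k-1}} with M of size n_i (0-indexed).\<close>
definition kron_slot :: "nat \<Rightarrow> (nat \<Rightarrow> nat) \<Rightarrow> nat \<Rightarrow> mat \<Rightarrow> mat" where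
  "kron_slot k n i M = kron (kron idm M (n i)) idm (\<Prod>j\<in>{i<..<k}. n j)"

definition Nn :: "nat \<Rightarrow> (nat \<Rightarrow> nat) \<Rightarrow> nat" where
  "Nn k n = (\<Prod>j<k. n j)"

definition msum :: "nat \<Rightarrow> (nat \<Rightarrow> mat) \<Rightarrow> mat" where
  "msum k F r c = (\<Sum>i<k. F i r c)"

definition Rn :: "nat \<Rightarrow> (nat \<Rightarrow> nat) \<Rightarrow> (nat \<Rightarrow> real) \<Rightarrow> (nat \<Rightarrow> real) \<Rightarrow> mat" where
  "Rn k n \<alpha> l = msum k (\<lambda>i. kron_slot k n i (smat (l i) (Rfrac (\<alpha> i))))"

definition tauRn :: "nat \<Rightarrow> (nat \<Rightarrow> nat) \<Rightarrow> (nat \<Rightarrow> real) \<Rightarrow> (nat \<Rightarrow> real) \<Rightarrow> mat" where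
  "tauRn k n \<alpha> l = msum k (\<lambda>i. kron_slot k n i (smat (l i) (tauRfrac (\<alpha> i) (n i))))"

definition qform :: "nat \<Rightarrow> mat \<Rightarrow> (nat \<Rightarrow> real) \<Rightarrow> real" where
  "qform N M z = (\<Sum>r<N. \<Sum>c<N. z r * M r c * z c)"

end

theory Submission
  imports Defs
begin

text \<open>For \<open>0 < \<alpha> < 2\<close> the coefficients \<open>\<rho>\<^sub>j\<close>, \<open>j \<ge> 1\<close>, are negative and increase towards 0,
  and \<open>\<rho>\<^sub>0 + 2(\<rho>\<^sub>1 + \<dots> + \<rho>\<^sub>M)\<close> telescopes to a positive multiple of \<open>-\<rho>\<^sub>M\<^sub>+\<^sub>1\<close>.
  Hence each off-diagonal Hankel entry of \<open>H\<^sub>n\<close> is at most the Toeplitz entry in the same position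
  in absolute value, and every row sum of \<open>|T\<^sub>n(r\<^sub>\<alpha>) - \<rho>\<^sub>0 I| + |H\<^sub>n|\<close> stays below \<open>\<rho>\<^sub>0\<close>, since a
  row uses each index \<open>1, \<dots>, n - 1\<close> at most twice. For \<open>-1 \<le> c \<le> 3\<close> the elementary bound
  \<open>x y (c b - a) \<ge> -(a + b)(x\<^sup>2 + y\<^sup>2)/2\<close> (for \<open>0 \<le> b \<le> a\<close>) then makes \<open>T\<^sub>n(r\<^sub>\<alpha>) - c H\<^sub>n\<close> positive
  definite by diagonal dominance. This survives \<open>I \<otimes> \<cdot> \<otimes> I\<close>, and \<open>c = -1\<close>, \<open>c = 3\<close> give
  \<open>2 R\<^sub>n - \<tau>(R\<^sub>n) \<succ> 0\<close> and \<open>3 \<tau>(R\<^sub>n) - 2 R\<^sub>n \<succ> 0\<close>.\<close>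

lemma rho_Suc_mult: "rho a (Suc j) * (real j + 1 + a/2) = rho a j * (real j - a/2)"
proof -
  have rho_rGamma: "rho a i = (-1)^i * Gamma (a + 1) * rGamma (a/2 - real i + 1) * rGamma (a/2 + real i + 1)"
    for i unfolding rho_def by (simp add: rGamma_inverse_Gamma field_simps)
  define u where "u = rGamma (a/2 - real j + 1)"
  define v where "v = rGamma (a/2 + real j + 2)"
  define w where "w = (-1)^j * Gamma (a + 1) * u * v"
  have u_Suc: "rGamma (a/2 - real (Suc j) + 1) = (a/2 - real j) * u"
    using rGamma_plus1[of "a/2 - real j"] unfolding u_def by (simp add: algebra_simps)
  have v_Suc: "rGamma (a/2 + real (Suc j) + 1) = v"
    unfolding v_def by (simp add: algebra_simps)
  have Suc_j: "rho a (Suc j) = - (a/2 - real j) * w"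
    unfolding rho_rGamma u_Suc v_Suc w_def by (simp add: algebra_simps)
  have v_j: "rGamma (a/2 + real j + 1) = (a/2 + real j + 1) * v"
    using rGamma_plus1[of "a/2 + real j + 1"] unfolding v_def by (simp add: algebra_simps)
  have j: "rho a j = (a/2 + real j + 1) * w"
    unfolding rho_rGamma v_j w_def u_def by simp
  show ?thesis unfolding Suc_j j by (simp add: field_simps)
qed

lemma rho_Suc:
  assumes "-2 < a"
  shows "rho a (Suc j) = rho a j * ((real j - a/2) / (real j + 1 + a/2))"
proof -
  have "0 < real j + 1 + a/2" using assms by simp
  then show ?thesis using rho_Suc_mult[of a j] by (simp add: eq_divide_eq)
qed

lemma rho_0_pos: "-1 < a \<Longrightarrow> 0 < rho a 0"
  unfolding rho_def by simp

lemma rho_neg: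
  assumes "0 < a" "a < 2" "1 \<le> j"
  shows "rho a j < 0"
  using assms(3)
proof (induction j rule: dec_induct)
  case base
  have "-(a/2) / (1 + a/2) < 0" using assms(1) by (simp add: divide_neg_pos)
  then show ?case using rho_Suc[of a 0] rho_0_pos[of a] assms(1) by (simp add: mult_pos_neg)
next
  case (step j)
  have "0 < (real j - a/2) / (real j + 1 + a/2)" using step.hyps assms by simp
  with step.IH have "rho a j * ((real j - a/2) / (real j + 1 + a/2)) < 0" by (rule mult_neg_pos)
  then show ?case using rho_Suc[of a j] assms(1) by simp
qed

lemma rho_mono:
  assumes "0 < a" "a < 2" "1 \<le> j" "j \<le> i"
  shows "rho a j \<le> rho a i"
  using assms(4)
proof (induction i rule: dec_induct)
  case (step i)
  have "(real i - a/2) / (real i + 1 + a/2) \<le> 1" using assms(1) by (simp add: divide_le_eq)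
  moreover have "rho a i < 0" using rho_neg assms step.hyps by simp
  ultimately have "rho a i * 1 \<le> rho a i * ((real i - a/2) / (real i + 1 + a/2))"
    by (intro mult_left_mono_neg) simp_all
  then show ?case using rho_Suc[of a i] step.IH assms(1) by simp
qed simp

lemma rho_partial_sum:
  assumes "a \<noteq> 0"
  shows "rho a 0 + 2 * (\<Sum>k=1..M. rho a k) = - (2/a) * ((real M + 1 + a/2) * rho a (Suc M))"
proof (induction M)
  case 0
  show ?case using rho_Suc_mult[of a 0] assms by (simp add: field_simps)
next
  case (Suc M)
  have "rho a 0 + 2 * (\<Sum>k=1..Suc M. rho a k) = - (2/a) * ((real M + 1 + a/2) * rho a (Suc M)) + 2 * rho a (Suc M)"
    using Suc.IH by simp
  also have "\<dots> = - (2/a) * ((real M + 1 - a/2) * rho a (Suc M))"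
    using assms by (simp add: algebra_simps)
  also have "\<dots> = - (2/a) * ((real (Suc M) + 1 + a/2) * rho a (Suc (Suc M)))"
  proof -
    have "(real (Suc M) + 1 + a/2) * rho a (Suc (Suc M)) = (real M + 1 - a/2) * rho a (Suc M)"
      using rho_Suc_mult[of a "Suc M"] by (simp add: algebra_simps)
    then show ?thesis by simp
  qed
  finally show ?case .
qed

lemma rho_partial_sum_pos:
  assumes "0 < a" "a < 2"
  shows "0 < rho a 0 + 2 * (\<Sum>k=1..M. rho a k)"
proof -
  have "(real M + 1 + a/2) * rho a (Suc M) < 0"
    using rho_neg[OF assms, of "Suc M"] assms by (simp add: mult_pos_neg)
  then have "(2/a) * ((real M + 1 + a/2) * rho a (Suc M)) < 0"
    using mult_pos_neg[of "2/a"] assms(1) by simp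
  then show ?thesis using rho_partial_sum[of a M] assms(1) by simp
qed

definition pos_def :: "nat \<Rightarrow> mat \<Rightarrow> bool" where
  "pos_def m M \<longleftrightarrow> (\<forall>y. (\<exists>i<m. y i \<noteq> 0) \<longrightarrow> 0 < qform m M y)"

lemma pos_def_qform_nonneg:
  assumes "pos_def m M"
  shows "0 \<le> qform m M y"
proof (cases "\<exists>i<m. y i \<noteq> 0")
  case True
  then show ?thesis using assms unfolding pos_def_def by (simp add: less_imp_le)
next
  case False
  then show ?thesis unfolding qform_def by simp
qed

lemma pair_product_lower_bound:
  fixes a b c x y :: real
  assumes "0 \<le> a" "0 \<le> b" "-1 \<le> c" "c \<le> 3" "b \<le> a \<or> x = y"
  shows "- (a + b) * (x^2 + y^2) / 2 \<le> x * y * (c * b - a)"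
proof -
  define E where "E c' = 2 * (x * y * (c' * b - a)) + (a + b) * (x^2 + y^2)" for c'
  have "0 \<le> E c"
  proof (cases "x = y")
    case True
    then have "E c = 2 * x^2 * ((c + 1) * b)"
      unfolding E_def by (simp add: algebra_simps power2_eq_square)
    then show ?thesis using assms by simp
  next
    case False
    have "E (-1) = (a + b) * (x - y)^2" "E 3 = (a - b) * (x - y)^2 + 2 * b * (x + y)^2"
      unfolding E_def by (simp_all add: algebra_simps power2_eq_square)
    then have "0 \<le> E (-1)" "0 \<le> E 3" using assms False by simp_all
    moreover have "4 * E c = (3 - c) * E (-1) + (c + 1) * E 3"
      unfolding E_def by (simp add: algebra_simps)
    ultimately show ?thesis using assms by (smt (verit) mult_nonneg_nonneg)
  qed
  then show ?thesis unfolding E_def by (simp add: field_simps)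
qed

lemma qform_diag_plus_lower_bound:
  fixes d :: real and E w :: mat
  assumes w_sym: "\<And>i j. i < m \<Longrightarrow> j < m \<Longrightarrow> w i j = w j i"
    and pair: "\<And>i j. i < m \<Longrightarrow> j < m \<Longrightarrow> - w i j * ((y i)^2 + (y j)^2) / 2 \<le> y i * y j * E i j"
  shows "(\<Sum>i<m. (y i)^2 * (d - (\<Sum>j<m. w i j))) \<le> qform m (\<lambda>i j. (if i = j then d else 0) + E i j) y"
proof -
  have swap: "(\<Sum>i<m. \<Sum>j<m. w i j * (y j)^2) = (\<Sum>i<m. \<Sum>j<m. w i j * (y i)^2)"
    by (subst sum.swap) (auto intro!: sum.cong simp: w_sym)
  have split: "- w i j * ((y i)^2 + (y j)^2) / 2 = (-(1/2)) * (w i j * (y i)^2) + (-(1/2)) * (w i j * (y j)^2)"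
    for i j by (simp add: field_simps)
  have halves: "(\<Sum>i<m. \<Sum>j<m. - w i j * ((y i)^2 + (y j)^2) / 2) = - (\<Sum>i<m. \<Sum>j<m. w i j * (y i)^2)"
    unfolding split sum.distrib sum_distrib_left[symmetric] swap by simp
  have "(\<Sum>i<m. (y i)^2 * (d - (\<Sum>j<m. w i j)))
      = (\<Sum>i<m. d * (y i)^2) + (\<Sum>i<m. \<Sum>j<m. - w i j * ((y i)^2 + (y j)^2) / 2)"
    unfolding halves by (simp add: algebra_simps sum_subtractf sum_distrib_left sum_distrib_right)
  also have "\<dots> \<le> (\<Sum>i<m. d * (y i)^2) + (\<Sum>i<m. \<Sum>j<m. y i * y j * E i j)"
    using pair by (intro add_left_mono sum_mono) auto
  also have "\<dots> = qform m (\<lambda>i j. (if i = j then d else 0) + E i j) y"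
  proof -
    have "y i * ((if i = j then d else 0) + E i j) * y j = (if i = j then d * (y i)^2 else 0) + y i * y j * E i j"
      for i j by (simp add: power2_eq_square algebra_simps)
    then show ?thesis unfolding qform_def by (simp add: sum.distrib)
  qed
  finally show ?thesis .
qed

lemma sum_inj_images_le:
  fixes g :: "'a \<Rightarrow> real"
  assumes "finite S" "inj_on f A" "inj_on h B" "f ` A \<subseteq> S" "h ` B \<subseteq> S" "f ` A \<inter> h ` B = {}"
    and "\<And>s. s \<in> S \<Longrightarrow> 0 \<le> g s"
  shows "(\<Sum>j\<in>A. g (f j)) + (\<Sum>j\<in>B. g (h j)) \<le> sum g S"
proof -
  have "finite (f ` A)" "finite (h ` B)" using assms(1,4,5) finite_subset by auto
  then have "(\<Sum>j\<in>A. g (f j)) + (\<Sum>j\<in>B. g (h j)) = sum g (f ` A \<union> h ` B)"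
    using assms(2,3,6) by (simp add: sum.union_disjoint sum.reindex)
  also have "\<dots> \<le> sum g S" using assms by (intro sum_mono2) auto
  finally show ?thesis .
qed

lemma hank_eq:
  "hank t m i j = (if i + j + 2 \<le> m - 1 then t (i + j + 2) else 0)
                + (if m + 1 \<le> i + j then t (2 * m - i - j) else 0)"
  unfolding hank_def Let_def by auto

lemma toep_le_hank:
  assumes t_nonpos: "\<And>j. 1 \<le> j \<Longrightarrow> t j \<le> 0"
    and t_mono: "\<And>i j. 1 \<le> j \<Longrightarrow> j \<le> i \<Longrightarrow> t j \<le> t i"
    and "i < m" "j < m" "i \<noteq> j"
  shows "toep t i j \<le> hank t m i j"
proof -
  define d where "d = (if i \<le> j then j - i else i - j)"
  have "1 \<le> d" "d \<le> i + j + 2" "d \<le> 2 * m - i - j" using assms(3-5) unfolding d_def by auto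
  then have "t d \<le> 0" "t d \<le> t (i + j + 2)" "t d \<le> t (2 * m - i - j)"
    using t_nonpos t_mono by auto
  then show ?thesis unfolding hank_eq toep_def d_def[symmetric] by auto
qed

lemma toep_hank_row_sum_le:
  assumes t_nonpos: "\<And>j. 1 \<le> j \<Longrightarrow> t j \<le> 0" and "i < m"
  shows "(\<Sum>j<m. (if i = j then 0 else - toep t i j) - hank t m i j) \<le> - 2 * (\<Sum>k=1..m-1. t k)"
proof -
  define g where "g k = - t k" for k
  have g_nonneg: "0 \<le> g k" if "k \<in> {1..m-1}" for k using t_nonpos that unfolding g_def by auto
  have row: "(if i = j then 0 else - toep t i j) - hank t m i j
      = ((if j < i then g (i - j) else 0) + (if i + j + 2 \<le> m - 1 then g (i + j + 2) else 0))
      + ((if i < j then g (j - i) else 0) + (if m + 1 \<le> i + j then g (2 * m - i - j) else 0))" for j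
    unfolding toep_def hank_eq g_def by auto
  have filter: "(\<Sum>j<m. if P j then f j else 0) = (\<Sum>j\<in>{j\<in>{..<m}. P j}. f j)"
    for P and f :: "nat \<Rightarrow> real" by (rule sum.inter_filter[symmetric]) simp
  have "(\<Sum>j<m. (if j < i then g (i - j) else 0) + (if i + j + 2 \<le> m - 1 then g (i + j + 2) else 0))
      \<le> sum g {1..m-1}"
    unfolding sum.distrib filter
    by (rule sum_inj_images_le) (use g_nonneg assms(2) in \<open>auto simp: inj_on_def\<close>)
  moreover have "(\<Sum>j<m. (if i < j then g (j - i) else 0) + (if m + 1 \<le> i + j then g (2 * m - i - j) else 0))
      \<le> sum g {1..m-1}"
    unfolding sum.distrib filter
    by (rule sum_inj_images_le) (use g_nonneg assms(2) in \<open>auto simp: inj_on_def\<close>)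
  ultimately show ?thesis unfolding row sum.distrib g_def by (simp add: sum_negf)
qed

lemma toep_minus_hank_pos_def:
  assumes t_nonpos: "\<And>j. 1 \<le> j \<Longrightarrow> t j \<le> 0"
    and t_mono: "\<And>i j. 1 \<le> j \<Longrightarrow> j \<le> i \<Longrightarrow> t j \<le> t i"
    and t_sum: "0 < t 0 + 2 * (\<Sum>k=1..m-1. t k)"
    and c: "-1 \<le> c" "c \<le> 3"
  shows "pos_def m (msub (toep t) (smat c (hank t m)))"
  unfolding pos_def_def
proof (intro allI impI)
  fix y :: "nat \<Rightarrow> real"
  assume "\<exists>i<m. y i \<noteq> 0"
  then obtain i0 where i0: "i0 < m" "y i0 \<noteq> 0" by blast
  define a where "a i j = (if i = j then 0 else - toep t i j)" for i j
  define b where "b i j = - hank t m i j" for i j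
  have a_nonneg: "0 \<le> a i j" for i j
    unfolding a_def toep_def using t_nonpos by auto
  have b_nonneg: "0 \<le> b i j" if "i < m" "j < m" for i j
    unfolding b_def hank_eq using t_nonpos that by auto
  have b_le_a: "b i j \<le> a i j" if "i < m" "j < m" "i \<noteq> j" for i j
    using toep_le_hank[of t, OF t_nonpos t_mono that] that unfolding a_def b_def by simp
  have entry: "msub (toep t) (smat c (hank t m)) i j = (if i = j then t 0 else 0) + (c * b i j - a i j)" for i j
    unfolding msub_def smat_def a_def b_def toep_def by simp
  have row_pos: "0 < t 0 - (\<Sum>j<m. a i j + b i j)" if "i < m" for i
    using toep_hank_row_sum_le[of t, OF t_nonpos that] t_sum unfolding a_def b_def by simp
  have "(\<Sum>i<m. (y i)^2 * (t 0 - (\<Sum>j<m. a i j + b i j))) \<le> qform m (msub (toep t) (smat c (hank t m))) y"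
    unfolding entry
  proof (rule qform_diag_plus_lower_bound)
    show "a i j + b i j = a j i + b j i" for i j
      unfolding a_def b_def toep_def hank_def by (auto simp: add.commute)
    show "- (a i j + b i j) * ((y i)^2 + (y j)^2) / 2 \<le> y i * y j * (c * b i j - a i j)"
      if "i < m" "j < m" for i j
      using that b_le_a by (intro pair_product_lower_bound a_nonneg b_nonneg c) auto
  qed
  moreover have "0 < (\<Sum>i<m. (y i)^2 * (t 0 - (\<Sum>j<m. a i j + b i j)))"
    using i0 row_pos by (intro sum_pos2[of _ i0]) (auto simp: less_imp_le)
  ultimately show "0 < qform m (msub (toep t) (smat c (hank t m))) y" by linarith
qed

lemma sum_lessThan_mult:
  fixes f :: "nat \<Rightarrow> 'a::comm_monoid_add"
  shows "(\<Sum>r<A * B. f r) = (\<Sum>a<A. \<Sum>b<B. f (a * B + b))"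
proof -
  have "(\<Sum>r\<in>{a * B..<a * B + B}. f r) = (\<Sum>b<B. f (a * B + b))" for a
    using sum.shift_bounds_nat_ivl[of f 0 "a * B" B] by (simp add: add.commute atLeast0LessThan)
  then show ?thesis using sum.nat_group[of f B A] by simp
qed

lemma qform_kron_idm:
  "qform (P * m * Q) (kron (kron idm M m) idm Q) z = (\<Sum>a<P. \<Sum>q<Q. qform m M (\<lambda>p. z ((a * m + p) * Q + q)))"
proof -
  define idx where "idx a p q = (a * m + p) * Q + q" for a p q
  have sum3: "(\<Sum>r<P * m * Q. f r) = (\<Sum>a<P. \<Sum>p<m. \<Sum>q<Q. f (idx a p q))" for f :: "nat \<Rightarrow> real"
    unfolding idx_def sum_lessThan_mult[of _ "P * m"] sum_lessThan_mult[of _ P] ..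
  have entry: "kron (kron idm M m) idm Q (idx a p q) (idx a' p' q') = idm a a' * M p p' * idm q q'"
    if "p < m" "q < Q" "p' < m" "q' < Q" for a p q a' p' q'
    using that unfolding kron_def idx_def by simp
  have delta: "(\<Sum>a'<P. idm a a' * f a') = f a" if "a < P" for a P and f :: "nat \<Rightarrow> real"
  proof -
    have "idm a a' * f a' = (if a = a' then f a' else 0)" for a' unfolding idm_def by simp
    then show ?thesis using that by (simp add: sum.delta)
  qed
  have row: "(\<Sum>c<P * m * Q. z (idx a p q) * kron (kron idm M m) idm Q (idx a p q) c * z c)
      = (\<Sum>p'<m. z (idx a p q) * M p p' * z (idx a p' q))"
    if "a < P" "p < m" "q < Q" for a p q
  proof -
    have "(\<Sum>c<P * m * Q. z (idx a p q) * kron (kron idm M m) idm Q (idx a p q) c * z c)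
        = (\<Sum>a'<P. idm a a' * (\<Sum>p'<m. \<Sum>q'<Q. idm q q' * (z (idx a p q) * M p p' * z (idx a' p' q'))))"
      unfolding sum3 sum_distrib_left using that by (intro sum.cong refl) (simp add: entry algebra_simps)
    also have "\<dots> = (\<Sum>p'<m. z (idx a p q) * M p p' * z (idx a p' q))"
      using that by (simp add: delta)
    finally show ?thesis .
  qed
  have "qform (P * m * Q) (kron (kron idm M m) idm Q) z
      = (\<Sum>a<P. \<Sum>p<m. \<Sum>q<Q. \<Sum>c<P * m * Q. z (idx a p q) * kron (kron idm M m) idm Q (idx a p q) c * z c)"
    unfolding qform_def by (rule sum3)
  also have "\<dots> = (\<Sum>a<P. \<Sum>p<m. \<Sum>q<Q. \<Sum>p'<m. z (idx a p q) * M p p' * z (idx a p' q))"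
    by (rule sum.cong[OF refl])+ (simp add: row)
  also have "\<dots> = (\<Sum>a<P. \<Sum>q<Q. qform m M (\<lambda>p. z (idx a p q)))"
    unfolding qform_def by (rule sum.cong[OF refl], rule sum.swap)
  finally show ?thesis unfolding idx_def .
qed

lemma pos_def_kron_idm:
  assumes "pos_def m M"
  shows "pos_def (P * m * Q) (kron (kron idm M m) idm Q)"
  unfolding pos_def_def
proof (intro allI impI)
  fix z :: "nat \<Rightarrow> real"
  assume "\<exists>r<P * m * Q. z r \<noteq> 0"
  then obtain r where r: "r < P * m * Q" "z r \<noteq> 0" by blast
  define a p q where "a = r div Q div m" and "p = r div Q mod m" and "q = r mod Q"
  have "P * m * Q \<noteq> 0" using r(1) by (rule gr_implies_not0)
  then have "0 < m" "0 < Q" by simp_all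
  then have "p < m" "q < Q" unfolding p_def q_def by simp_all
  have r_eq: "r = (a * m + p) * Q + q" unfolding a_def p_def q_def by simp
  have "a < P" unfolding a_def div_mult2_eq using r(1) by (intro less_mult_imp_div_less) (simp add: ac_simps)
  have slice_nonneg: "0 \<le> qform m M (\<lambda>p. z ((a' * m + p) * Q + q'))" for a' q'
    using assms by (rule pos_def_qform_nonneg)
  have "0 < qform m M (\<lambda>p. z ((a * m + p) * Q + q))"
    using \<open>p < m\<close> r(2) r_eq by (intro assms[unfolded pos_def_def, rule_format]) auto
  then have "0 < (\<Sum>q'<Q. qform m M (\<lambda>p. z ((a * m + p) * Q + q')))"
    using \<open>q < Q\<close> slice_nonneg by (intro sum_pos2[of _ q]) auto
  then have "0 < (\<Sum>a'<P. \<Sum>q'<Q. qform m M (\<lambda>p. z ((a' * m + p) * Q + q')))"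
    using \<open>a < P\<close> slice_nonneg by (intro sum_pos2[of "{..<P}" a]) (auto intro: sum_nonneg)
  then show "0 < qform (P * m * Q) (kron (kron idm M m) idm Q) z"
    unfolding qform_kron_idm .
qed

lemma Nn_split:
  assumes "i < k"
  shows "Nn k n = (\<Prod>j<i. n j) * n i * (\<Prod>j\<in>{i<..<k}. n j)"
proof -
  have "{..<k} = {..<i} \<union> ({i} \<union> {i<..<k})" using assms by auto
  then have "Nn k n = (\<Prod>j\<in>{..<i} \<union> ({i} \<union> {i<..<k}). n j)" unfolding Nn_def by simp
  also have "\<dots> = (\<Prod>j<i. n j) * (n i * (\<Prod>j\<in>{i<..<k}. n j))"
    by (subst prod.union_disjoint) (auto simp: prod.union_disjoint)
  finally show ?thesis by (simp add: mult.assoc)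
qed

lemma pos_def_kron_slot:
  assumes "i < k" "pos_def (n i) M"
  shows "pos_def (Nn k n) (kron_slot k n i M)"
  unfolding kron_slot_def Nn_split[OF assms(1)] using assms(2) by (rule pos_def_kron_idm)

lemma kron_slot_msub: "kron_slot k n i (msub A B) = msub (kron_slot k n i A) (kron_slot k n i B)"
  unfolding kron_slot_def kron_def msub_def by (simp add: fun_eq_iff algebra_simps)

lemma kron_slot_smat: "kron_slot k n i (smat c A) = smat c (kron_slot k n i A)"
  unfolding kron_slot_def kron_def smat_def by (simp add: fun_eq_iff algebra_simps)

lemma qform_msub: "qform N (msub A B) z = qform N A z - qform N B z"
  unfolding qform_def msub_def by (simp add: algebra_simps sum_subtractf)

lemma qform_smat: "qform N (smat c A) z = c * qform N A z"
  unfolding qform_def smat_def by (simp add: algebra_simps sum_distrib_left)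

lemma qform_msum: "qform N (msum k F) z = (\<Sum>i<k. qform N (F i) z)"
  unfolding qform_def msum_def
  by (simp add: sum_distrib_left sum_distrib_right sum.swap[of _ "{..<k}"])

lemma weighted_quotient_bounds:
  fixes l T H :: "nat \<Rightarrow> real"
  assumes "0 < k" and "\<And>i. i < k \<Longrightarrow> 0 < l i"
    and "\<And>i. i < k \<Longrightarrow> 0 < T i + H i" and "\<And>i. i < k \<Longrightarrow> 0 < T i - 3 * H i"
  shows "1/2 < (\<Sum>i<k. l i * T i) / (\<Sum>i<k. l i * (T i - H i))
       \<and> (\<Sum>i<k. l i * T i) / (\<Sum>i<k. l i * (T i - H i)) < 3/2"
proof -
  define X Y where "X = (\<Sum>i<k. l i * T i)" and "Y = (\<Sum>i<k. l i * (T i - H i))"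
  have "2 * X - Y = (\<Sum>i<k. l i * (T i + H i))"
    unfolding X_def Y_def by (simp add: sum_distrib_left sum_subtractf[symmetric] algebra_simps)
  also have "0 < \<dots>" using assms by (intro sum_pos) auto
  finally have lower: "0 < 2 * X - Y" .
  have "3 * Y - 2 * X = (\<Sum>i<k. l i * (T i - 3 * H i))"
    unfolding X_def Y_def by (simp add: sum_distrib_left sum_subtractf[symmetric] algebra_simps)
  also have "0 < \<dots>" using assms by (intro sum_pos) auto
  finally have upper: "0 < 3 * Y - 2 * X" .
  from lower upper have "0 < Y" by linarith
  with lower upper show ?thesis unfolding X_def[symmetric] Y_def[symmetric] by (simp add: field_simps)
qed

theorem lemma6:
  fixes k :: nat and n :: "nat \<Rightarrow> nat" and \<alpha> l :: "nat \<Rightarrow> real" and z :: "nat \<Rightarrow> real"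
  assumes "k \<ge> 1"
    and "\<And>i. i < k \<Longrightarrow> 1 < \<alpha> i \<and> \<alpha> i < 2"
    and "\<And>i. i < k \<Longrightarrow> l i > 0"
    and "\<exists>r < Nn k n. z r \<noteq> 0"
  shows "1/2 < qform (Nn k n) (Rn k n \<alpha> l) z / qform (Nn k n) (tauRn k n \<alpha> l) z
       \<and> qform (Nn k n) (Rn k n \<alpha> l) z / qform (Nn k n) (tauRn k n \<alpha> l) z < 3/2"
proof -
  define T where "T i = qform (Nn k n) (kron_slot k n i (Rfrac (\<alpha> i))) z" for i
  define H where "H i = qform (Nn k n) (kron_slot k n i (hank (rho (\<alpha> i)) (n i))) z" for i
  have slot_pos: "0 < T i - c * H i" if "i < k" "-1 \<le> c" "c \<le> 3" for i c
  proof -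
    have "0 < \<alpha> i" "\<alpha> i < 2" using assms(2)[OF that(1)] by auto
    then have "pos_def (n i) (msub (Rfrac (\<alpha> i)) (smat c (hank (rho (\<alpha> i)) (n i))))"
      unfolding Rfrac_def using that(2,3)
      by (intro toep_minus_hank_pos_def rho_neg[THEN less_imp_le] rho_mono rho_partial_sum_pos)
    then have "pos_def (Nn k n) (kron_slot k n i (msub (Rfrac (\<alpha> i)) (smat c (hank (rho (\<alpha> i)) (n i)))))"
      using that(1) by (intro pos_def_kron_slot)
    then show ?thesis using assms(4)
      unfolding pos_def_def kron_slot_msub kron_slot_smat qform_msub qform_smat T_def H_def by blast
  qed
  have R_eq: "qform (Nn k n) (Rn k n \<alpha> l) z = (\<Sum>i<k. l i * T i)"
    unfolding Rn_def qform_msum kron_slot_smat qform_smat T_def ..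
  have tau_eq: "qform (Nn k n) (tauRn k n \<alpha> l) z = (\<Sum>i<k. l i * (T i - H i))"
    unfolding tauRn_def tauRfrac_def tau_toep_def qform_msum kron_slot_smat qform_smat
      kron_slot_msub qform_msub T_def H_def Rfrac_def ..
  show ?thesis unfolding R_eq tau_eq
    using assms(1,3) slot_pos[of _ "-1"] slot_pos[of _ 3] by (intro weighted_quotient_bounds) auto
qed

end
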